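(* Let $X$ be a separable infinite dimensional Banach space and let $T$ be a bounded linear operator on $X$. If $T$ satisfies the Hypercyclicity Criterion, then $T$ satisfies the $\varepsilon$-Hypercyclicity Criterion for every $\varepsilon>0$.
   Context: $T$ satisfies the Hypercyclicity Criterion if there exist a sequence of integers $(n(k))_k$, two dense sets $\mathcal{D}_1,\mathcal{D}_2\subset X$ and maps $S_{n(k)}:\mathcal{D}_2\to X$ such that $T^{n(k)}x\to0$ for all $x\in\mathcal{D}_1$, $S_{n(k)}y\to0$ for all $y\in\mathcal{D}_2$, and $T^{n(k)}S_{n(k)}y\to y$ for all $y\in\mathcal{D}_2$. For $\varepsilon>0$, $T$ satisfies the $\varepsilon$-Hypercyclicity Criterion if there exist a dense set $\mathcal{D}_1\subset X$, a countable set $\mathcal{D}_2=\{y_k:k\in\mathbb{N}\}\subset X$ (with a fixed enumeration) such that for each $x\in X\setminus\{0\}$ there are infinitely many $k$ with $y_k$ in the closed ball $B(x,\varepsilon\|x\|)$, an increasing sequence $(n(k))_k\subset\mathbb{N}$ and maps $S_{n(k)}:\mathcal{D}_2\to X$ such that $\|T^{n(k)}x\|\to0$ for all $x\in\mathcal{D}_1$, $\|S_{n(k)}y_k\|\to0$, and $\|T^{n(k)}S_{n(k)}y_k-y_k\|\to0$ as $k\to\infty$. *)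

theory Defs
  imports "HOL-Analysis.Analysis"
begin

definition infinite_dimensional :: "'a::real_vector itself \<Rightarrow> bool" where
  "infinite_dimensional _ \<longleftrightarrow> \<not> (\<exists>B::'a set. finite B \<and> span B = UNIV)"

definition hypercyclicity_criterion :: "('a::real_normed_vector \<Rightarrow> 'a) \<Rightarrow> bool" where
  "hypercyclicity_criterion T \<longleftrightarrow>
     (\<exists>(n::nat \<Rightarrow> nat) (D1::'a set) (D2::'a set) (S::nat \<Rightarrow> 'a \<Rightarrow> 'a).
        closure D1 = UNIV \<and> closure D2 = UNIV \<and>
        (\<forall>x\<in>D1. (\<lambda>k. (T ^^ n k) x) \<longlonglongrightarrow> 0) \<and>
        (\<forall>y\<in>D2. (\<lambda>k. S (n k) y) \<longlonglongrightarrow> 0) \<and>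
        (\<forall>y\<in>D2. (\<lambda>k. (T ^^ n k) (S (n k) y)) \<longlonglongrightarrow> y))"

text \<open>epsilon-Hypercyclicity Criterion; D2 = range y with the enumeration y,
  S (n k) is the map S_{n(k)} defined on D2.\<close>
definition eps_hypercyclicity_criterion :: "real \<Rightarrow> ('a::real_normed_vector \<Rightarrow> 'a) \<Rightarrow> bool" where
  "eps_hypercyclicity_criterion \<epsilon> T \<longleftrightarrow>
     (\<exists>(D1::'a set) (y::nat \<Rightarrow> 'a) (n::nat \<Rightarrow> nat) (S::nat \<Rightarrow> 'a \<Rightarrow> 'a).
        closure D1 = UNIV \<and>
        (\<forall>x. x \<noteq> 0 \<longrightarrow> infinite {k. y k \<in> cball x (\<epsilon> * norm x)}) \<and>
        strict_mono n \<and>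
        (\<forall>x\<in>D1. (\<lambda>k. norm ((T ^^ n k) x)) \<longlonglongrightarrow> 0) \<and>
        (\<lambda>k. norm (S (n k) (y k))) \<longlonglongrightarrow> 0 \<and>
        (\<lambda>k. norm ((T ^^ n k) (S (n k) (y k)) - y k)) \<longlonglongrightarrow> 0)"

end

theory Submission
  imports Defs
begin

(* The exponents n(k) of the Hypercyclicity Criterion tend to infinity as soon as X \<noteq> {0} (the
   only use of infinite dimensionality): if some value v recurred infinitely often, T^v would
   vanish on the dense set D1, hence everywhere, and T^{n(k)} S_{n(k)} y \<rightarrow> y would force D2 = {0}.
   Choose a dense sequence (c i) inside D2 and list it so that every term recurs infinitely often;
   for x \<noteq> 0 the ball of radius \<epsilon>\<parallel>x\<parallel> then contains infinitely many terms y_k. A diagonal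
   argument finally picks a strictly increasing subsequence of exponents along which \<parallel>S y_k\<parallel>
   and \<parallel>T^n S y_k - y_k\<parallel> fall below 1/(k+1). *)

lemma continuous_on_funpow:
  fixes f :: "'a::topological_space \<Rightarrow> 'a"
  assumes "continuous_on UNIV f"
  shows "continuous_on UNIV (f ^^ m)"
proof (induction m)
  case (Suc m)
  have "continuous_on UNIV (f \<circ> f ^^ m)"
    by (rule continuous_on_compose[OF Suc.IH]) (rule continuous_on_subset[OF assms], simp)
  then show ?case
    by simp
qed (simp add: continuous_on_id)

lemma not_filterlim_at_top_frequently_eq:
  fixes n :: "'b \<Rightarrow> nat"
  assumes "\<not> filterlim n at_top F"
  obtains v where "\<exists>\<^sub>F k in F. n k = v"
proof -
  from assms obtain N where "\<not> eventually (\<lambda>k. N \<le> n k) F"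
    by (auto simp: filterlim_at_top)
  then have "\<exists>\<^sub>F k in F. n k < N"
    by (simp add: not_eventually not_le)
  then have "\<exists>\<^sub>F k in F. \<exists>v\<in>{..<N}. n k = v"
    by (rule frequently_elim1) simp
  then have "\<exists>v\<in>{..<N}. \<exists>\<^sub>F k in F. n k = v"
    by (rule frequently_bex_finite[OF finite_lessThan])
  then show ?thesis
    using that by blast
qed

lemma hypercyclicity_criterion_exponents_tendsto_infinity:
  fixes T :: "'a::real_normed_vector \<Rightarrow> 'a"
  assumes "continuous_on UNIV T" and "(UNIV :: 'a set) \<noteq> {0}"
    and "closure D1 = UNIV" and "closure D2 = UNIV"
    and "\<forall>x\<in>D1. (\<lambda>k. (T ^^ n k) x) \<longlonglongrightarrow> 0"
    and "\<forall>y\<in>D2. (\<lambda>k. (T ^^ n k) (S (n k) y)) \<longlonglongrightarrow> y"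
  shows "filterlim n at_top sequentially"
proof (rule ccontr)
  assume "\<not> filterlim n at_top sequentially"
  then obtain v where v: "\<exists>\<^sub>F k in sequentially. n k = v"
    by (rule not_filterlim_at_top_frequently_eq)
  have "(T ^^ v) x = 0" if "x \<in> D1" for x
  proof -
    have "\<exists>\<^sub>F k in sequentially. (T ^^ n k) x = (T ^^ v) x"
      using v by (rule frequently_elim1) simp
    moreover have "(\<lambda>k. (T ^^ n k) x) \<longlonglongrightarrow> 0"
      using assms(5) that by blast
    ultimately show ?thesis
      using limit_frequently_eq[OF sequentially_bot] by metis
  qed
  then have T_v_zero: "(T ^^ v) x = 0" for x
    using continuous_constant_on_closure[of D1 "T ^^ v" 0 x]
      continuous_on_funpow[OF assms(1)] assms(3) by auto
  have "y = 0" if "y \<in> D2" for y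
  proof -
    have "\<exists>\<^sub>F k in sequentially. (T ^^ n k) (S (n k) y) = 0"
      using v by (rule frequently_elim1) (simp add: T_v_zero)
    moreover have "(\<lambda>k. (T ^^ n k) (S (n k) y)) \<longlonglongrightarrow> y"
      using assms(6) that by blast
    ultimately show ?thesis
      using limit_frequently_eq[OF sequentially_bot] by metis
  qed
  then have "closure D2 \<subseteq> {0}"
    by (intro closure_minimal) auto
  with assms(2,4) show False
    by blast
qed

lemma infinite_dimensional_nontrivial:
  assumes "infinite_dimensional TYPE('a::real_vector)"
  shows "(UNIV :: 'a set) \<noteq> {0}"
proof -
  have "span {} \<noteq> (UNIV :: 'a set)"
    using assms unfolding infinite_dimensional_def by blast
  then show ?thesis
    by auto
qed

lemma separable_dense_set_contains_dense_sequence: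
  fixes D :: "'a::metric_space set"
  assumes "separable_space (euclidean :: 'a topology)" and "closure D = UNIV"
  obtains c :: "nat \<Rightarrow> 'a" where "range c \<subseteq> D" and "closure (range c) = UNIV"
proof -
  obtain C :: "'a set" where "countable C" and C_dense: "closure C = UNIV"
    using assms(1) by (auto simp: separable_space_def)
  have "\<exists>s. (\<forall>i. s i \<in> D) \<and> s \<longlonglongrightarrow> u" for u
    using assms(2) closure_sequential[of u D] by simp
  then obtain s where s_in: "\<And>u i. s u i \<in> D" and s_lim: "\<And>u. s u \<longlonglongrightarrow> u"
    by metis
  define E where "E = (\<lambda>(u, i). s u i) ` (C \<times> UNIV)"
  have "countable E"
    unfolding E_def using \<open>countable C\<close> by auto
  have "C \<subseteq> closure E"
  proof
    fix u assume "u \<in> C"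
    then have "\<forall>i. s u i \<in> E"
      unfolding E_def by force
    with s_lim show "u \<in> closure E"
      unfolding closure_sequential by blast
  qed
  then have E_dense: "closure E = UNIV"
    using C_dense closure_minimal[of C "closure E"] by auto
  then have "E \<noteq> {}"
    by auto
  show ?thesis
  proof
    show "range (from_nat_into E) \<subseteq> D"
      using range_from_nat_into_subset[OF \<open>E \<noteq> {}\<close>] s_in by (auto simp: E_def)
    show "closure (range (from_nat_into E)) = UNIV"
      using E_dense \<open>E \<noteq> {}\<close> \<open>countable E\<close> by simp
  qed
qed

lemma infinite_fst_prod_decode_eq: "infinite {k. fst (prod_decode k) = i}"
proof -
  have "range (\<lambda>l. prod_encode (i, l)) \<subseteq> {k. fst (prod_decode k) = i}"
    by auto
  moreover have "inj (\<lambda>l. prod_encode (i, l))"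
    by (auto simp: inj_def prod_encode_eq)
  ultimately show ?thesis
    using finite_subset range_inj_infinite by blast
qed

lemma dense_sequence_prod_decode_infinite_visits:
  fixes c :: "nat \<Rightarrow> 'a::metric_space"
  assumes "closure (range c) = UNIV" and "r > 0"
  shows "infinite {k. c (fst (prod_decode k)) \<in> cball x r}"
proof -
  obtain i where "dist x (c i) < r"
    using assms closure_approachable[of x "range c"] by (auto simp: dist_commute)
  then have "c i \<in> cball x r"
    by simp
  then have "{k. fst (prod_decode k) = i} \<subseteq> {k. c (fst (prod_decode k)) \<in> cball x r}"
    by auto
  then show ?thesis
    using infinite_fst_prod_decode_eq finite_subset by blast
qed

lemma diagonal_subseq_eventually:
  fixes n :: "nat \<Rightarrow> nat" and P :: "nat \<Rightarrow> nat \<Rightarrow> bool"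
  assumes "filterlim n at_top sequentially" and "\<And>k. eventually (P k) sequentially"
  obtains r where "strict_mono r" and "strict_mono (n \<circ> r)" and "\<And>k. P k (r k)"
proof -
  have step: "\<exists>m. P k m \<and> a < m \<and> n a < n m" for k a
  proof -
    have "eventually (\<lambda>m. P k m \<and> a < m \<and> n a < n m) sequentially"
      using assms(2)[of k] eventually_gt_at_top[of a]
        filterlim_at_top[THEN iffD1, OF assms(1), rule_format, of "Suc (n a)"]
      by eventually_elim auto
    then show ?thesis
      by (rule eventually_happens'[OF sequentially_bot])
  qed
  have "\<exists>r. \<forall>k. P k (r k) \<and> (r k < r (Suc k) \<and> n (r k) < n (r (Suc k)))"
    by (rule dependent_nat_choice[of P "\<lambda>_ a b. a < b \<and> n a < n b"]) (use step in auto)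
  then obtain r where r: "\<And>k. P k (r k)" "\<And>k. r k < r (Suc k)" "\<And>k. n (r k) < n (r (Suc k))"
    by blast
  show ?thesis
  proof (rule that)
    show "strict_mono r" and "strict_mono (n \<circ> r)"
      using r(2,3) by (simp_all add: strict_mono_Suc_iff)
  qed (fact r(1))
qed

lemma eps_hypercyclicity_criterionI:
  fixes T :: "'a::real_normed_vector \<Rightarrow> 'a" and y :: "nat \<Rightarrow> 'a" and n :: "nat \<Rightarrow> nat"
  assumes "closure D1 = UNIV"
    and "\<forall>x\<in>D1. (\<lambda>k. (T ^^ n k) x) \<longlonglongrightarrow> 0"
    and "\<forall>z\<in>D2. (\<lambda>k. S (n k) z) \<longlonglongrightarrow> 0"
    and "\<forall>z\<in>D2. (\<lambda>k. (T ^^ n k) (S (n k) z)) \<longlonglongrightarrow> z"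
    and "filterlim n at_top sequentially"
    and "range y \<subseteq> D2"
    and "\<forall>x. x \<noteq> 0 \<longrightarrow> infinite {k. y k \<in> cball x (\<epsilon> * norm x)}"
  shows "eps_hypercyclicity_criterion \<epsilon> T"
proof -
  define P where "P k m \<longleftrightarrow> norm (S (n m) (y k)) < 1 / real (Suc k) \<and>
    norm ((T ^^ n m) (S (n m) (y k)) - y k) < 1 / real (Suc k)" for k m
  have ev: "eventually (P k) sequentially" for k
  proof -
    have "y k \<in> D2"
      using assms(6) by blast
    then have "(\<lambda>m. S (n m) (y k)) \<longlonglongrightarrow> 0"
      and "(\<lambda>m. (T ^^ n m) (S (n m) (y k)) - y k) \<longlonglongrightarrow> 0"
      using assms(3,4) LIM_zero by blast+
    then show ?thesis
      unfolding P_def tendsto_iff by (auto simp: eventually_conj_iff)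
  qed
  obtain r where "strict_mono r" "strict_mono (n \<circ> r)" and r: "\<And>k. P k (r k)"
    using diagonal_subseq_eventually[of n P, OF assms(5) ev] by blast
  have "(\<lambda>k. norm ((T ^^ n (r k)) x)) \<longlonglongrightarrow> 0" if "x \<in> D1" for x
  proof -
    have "(\<lambda>k. (T ^^ n k) x) \<longlonglongrightarrow> 0"
      using assms(2) that by blast
    from tendsto_norm_zero[OF LIMSEQ_subseq_LIMSEQ[OF this \<open>strict_mono r\<close>]] show ?thesis
      by (simp add: o_def)
  qed
  moreover have "(\<lambda>k. norm (S (n (r k)) (y k))) \<longlonglongrightarrow> 0"
    and "(\<lambda>k. norm ((T ^^ n (r k)) (S (n (r k)) (y k)) - y k)) \<longlonglongrightarrow> 0"
    using r by (auto simp: P_def intro: LIMSEQ_norm_0)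
  ultimately show ?thesis
    unfolding eps_hypercyclicity_criterion_def
    using assms(1,7) \<open>strict_mono (n \<circ> r)\<close>
    by (intro exI[of _ D1] exI[of _ y] exI[of _ "n \<circ> r"] exI[of _ S] conjI) (simp_all add: o_def)
qed

theorem proposition3p4:
  fixes T :: "'a::banach \<Rightarrow> 'a"
  assumes "separable_space (euclidean :: 'a topology)"
    and "infinite_dimensional TYPE('a)"
    and "bounded_linear T"
    and "hypercyclicity_criterion T"
  shows "\<forall>\<epsilon>>0. eps_hypercyclicity_criterion \<epsilon> T"
proof (intro allI impI)
  fix \<epsilon> :: real
  assume "\<epsilon> > 0"
  obtain n D1 D2 S where D1: "closure D1 = (UNIV :: 'a set)" and D2: "closure D2 = (UNIV :: 'a set)"
    and lim_T: "\<forall>x\<in>D1. (\<lambda>k. (T ^^ n k) x) \<longlonglongrightarrow> 0"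
    and lim_S: "\<forall>y\<in>D2. (\<lambda>k. S (n k) y) \<longlonglongrightarrow> 0"
    and lim_TS: "\<forall>y\<in>D2. (\<lambda>k. (T ^^ n k) (S (n k) y)) \<longlonglongrightarrow> y"
    using assms(4) unfolding hypercyclicity_criterion_def by blast
  have n_unbounded: "filterlim n at_top sequentially"
    using infinite_dimensional_nontrivial[OF assms(2)]
    by (rule hypercyclicity_criterion_exponents_tendsto_infinity[OF
          linear_continuous_on[OF assms(3)] _ D1 D2 lim_T lim_TS])
  obtain c :: "nat \<Rightarrow> 'a" where c_in: "range c \<subseteq> D2" and c_dense: "closure (range c) = UNIV"
    by (rule separable_dense_set_contains_dense_sequence[OF assms(1) D2])
  show "eps_hypercyclicity_criterion \<epsilon> T"
  proof (rule eps_hypercyclicity_criterionI[OF D1 lim_T lim_S lim_TS n_unbounded])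
    show "range (\<lambda>k. c (fst (prod_decode k))) \<subseteq> D2"
      using c_in by auto
    show "\<forall>x. x \<noteq> 0 \<longrightarrow> infinite {k. c (fst (prod_decode k)) \<in> cball x (\<epsilon> * norm x)}"
      using dense_sequence_prod_decode_infinite_visits[OF c_dense] \<open>\<epsilon> > 0\<close> by simp
  qed
qed

end
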